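(* Let $\epsilon>0$ and $\nu\ge1$ be fixed. Then there exists $K_{\epsilon,\nu}>0$ such that for all sufficiently large $n$, \[ \sup_{z\in\mathbb{C}}\int_{2^{-\epsilon}}^{2^\epsilon}r'\,dr'\,e^{-n|\log r'|}|\log r'|^{\nu-1}\int_{-\pi}^{\pi}\frac{d\theta'}{|z'-z|}\le K_{\epsilon,\nu}\frac{\log(n)}{n^\nu}, \] where $z'=r'e^{i\theta'}$. Moreover, for each $\rho>2^\epsilon$ there exists $K_{\epsilon,\nu,\rho}>0$ such that for all sufficiently large $n$, \[ \sup_{|\log|z||\ge\log\rho}\int_{2^{-\epsilon}}^{2^\epsilon}r'\,dr'\,e^{-n|\log r'|}|\log r'|^{\nu-1}\int_{-\pi}^{\pi}\frac{d\theta'}{|z'-z|}\le\frac{K_{\epsilon,\nu,\rho}}{n^\nu}. \] *)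

theory Defs
  imports "HOL-Analysis.Analysis"
begin

definition angular_int :: "real \<Rightarrow> complex \<Rightarrow> ennreal" where
  "angular_int r z =
     (\<integral>\<^sup>+ \<theta>. indicator {-pi..pi} \<theta> * ennreal (1 / cmod (complex_of_real r * cis \<theta> - z)) \<partial>lborel)"

definition radial_int :: "real \<Rightarrow> real \<Rightarrow> nat \<Rightarrow> complex \<Rightarrow> ennreal" where
  "radial_int \<epsilon> \<nu> n z =
     (\<integral>\<^sup>+ r. indicator {2 powr (-\<epsilon>)..2 powr \<epsilon>} r *
        ennreal (r * exp (- real n * \<bar>ln r\<bar>) * \<bar>ln r\<bar> powr (\<nu> - 1)) * angular_int r z \<partial>lborel)"

end

(*
  Write s = |z|. The distance |r e^(i theta) - z| dominates both |r - s| and, up to a constant,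
  the angular distance of theta to arg z; the interpolation 1/m <= |r - s|^(-alpha) |theta - arg z|^(alpha - 1)
  of these two bounds makes the angular integral O(|r - s|^(-alpha) / alpha) for every 0 < alpha < 1.
  On [2^(-eps), 2^eps] the radial weight is O(n^(1 - nu) e^(-c n |r - 1|)), whose integral is O(1/n).
  If |log |z|| >= log rho, then |r - s| is bounded below and the bound O(n^(-nu)) follows at once.
  In general take alpha = 1/log n and cut out |r - s| <= n^(-2): there |r - s|^(-alpha) is integrable
  with integral O(n^(-2)), elsewhere it is at most e^2, and the factor 1/alpha = log n is the only loss.
*)
theory Submission
  imports Defs
begin

lemma nn_integral_centered_abs:
  fixes g :: "real \<Rightarrow> real"
  assumes g: "(g has_integral I) {0..L}" and g_nonneg: "\<And>x. 0 \<le> x \<Longrightarrow> x \<le> L \<Longrightarrow> 0 \<le> g x"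
    and "0 \<le> L" and [measurable]: "g \<in> borel_measurable borel"
  shows "(\<integral>\<^sup>+x. indicator {t-L..t+L} x * ennreal (g \<bar>x - t\<bar>) \<partial>lborel) = ennreal (2 * I)"
proof -
  have "(\<integral>\<^sup>+x. indicator {t-L..t+L} x * ennreal (g \<bar>x - t\<bar>) \<partial>lborel)
     = (\<integral>\<^sup>+x. indicator {t-L..t+L} (t + 1 * x) * ennreal (g \<bar>(t + 1 * x) - t\<bar>) \<partial>lborel)"
    using nn_integral_real_affine[of "\<lambda>x. indicator {t-L..t+L} x * ennreal (g \<bar>x - t\<bar>)" 1 t] by simp
  also have "\<dots> = (\<integral>\<^sup>+x. ennreal (indicator {-L..L} x * g \<bar>x\<bar>) \<partial>lborel)"
    by (intro nn_integral_cong) (auto simp: indicator_def)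
  also have "\<dots> = ennreal (I + I)"
  proof (rule nn_integral_has_integral_lebesgue)
    show "\<And>x. x \<in> {-L..L} \<Longrightarrow> 0 \<le> g \<bar>x\<bar>"
      using g_nonneg by auto
    have right: "((\<lambda>x. g \<bar>x\<bar>) has_integral I) {0..L}"
      using g by (subst has_integral_cong[where g=g]) auto
    then have "((\<lambda>x. g \<bar>-x\<bar>) has_integral I) {-L..-0}"
      by (subst has_integral_reflect_real)
    then have left: "((\<lambda>x. g \<bar>x\<bar>) has_integral I) {-L..0}"
      by simp
    show "((\<lambda>x. g \<bar>x\<bar>) has_integral I + I) {-L..L}"
      by (rule has_integral_combine[OF _ _ left right]) (use \<open>0 \<le> L\<close> in auto)
  qed
  finally show ?thesis
    by simp
qed

lemma nn_integral_centered_abs_powr: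
  assumes "p > -1" "0 \<le> L"
  shows "(\<integral>\<^sup>+x. indicator {t-L..t+L} x * ennreal (\<bar>x - t\<bar> powr p) \<partial>lborel)
        = ennreal (2 * L powr (p+1) / (p+1))"
  using nn_integral_centered_abs[OF has_integral_powr_from_0] assms by auto

lemma nn_integral_centered_exp_le:
  assumes "0 < c" "0 \<le> L"
  shows "(\<integral>\<^sup>+x. indicator {t-L..t+L} x * ennreal (exp (- c * \<bar>x - t\<bar>)) \<partial>lborel) \<le> ennreal (2 / c)"
proof -
  let ?F = "\<lambda>x. - exp (- c * x) / c"
  have "((\<lambda>x. exp (- c * x)) has_integral (?F L - ?F 0)) {0..L}"
  proof (rule fundamental_theorem_of_calculus)
    fix x :: real
    show "(?F has_vector_derivative exp (- c * x)) (at x within {0..L})"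
      using \<open>0 < c\<close>
      by (auto intro!: derivative_eq_intros simp: has_real_derivative_iff_has_vector_derivative[symmetric])
  qed (use assms in auto)
  then have "(\<integral>\<^sup>+x. indicator {t-L..t+L} x * ennreal (exp (- c * \<bar>x - t\<bar>)) \<partial>lborel)
      = ennreal (2 * (?F L - ?F 0))"
    by (intro nn_integral_centered_abs) (use assms in auto)
  also have "\<dots> \<le> ennreal (2 / c)"
    using assms by (intro ennreal_leI) (auto simp: field_simps)
  finally show ?thesis .
qed

lemma nn_integral_exp_times_singular_le:
  assumes c: "0 < c" and L: "0 \<le> L" and \<delta>: "0 < \<delta>" and \<alpha>: "0 \<le> \<alpha>" "\<alpha> < 1"
  shows "(\<integral>\<^sup>+x. indicator {t-L..t+L} x * ennreal (exp (- c * \<bar>x - t\<bar>) * \<bar>x - s\<bar> powr -\<alpha>) \<partial>lborel)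
        \<le> ennreal (\<delta> powr -\<alpha> * (2 / c) + 2 * \<delta> powr (1 - \<alpha>) / (1 - \<alpha>))"
proof -
  define E where "E x = indicator {t-L..t+L} x * exp (- c * \<bar>x - t\<bar>)" for x :: real
  define S where "S x = indicator {s-\<delta>..s+\<delta>} x * \<bar>x - s\<bar> powr -\<alpha>" for x :: real
  have E_nonneg: "0 \<le> E x" and S_nonneg: "0 \<le> S x" for x
    by (simp_all add: E_def S_def)
  have split: "indicator {t-L..t+L} x * (exp (- c * \<bar>x - t\<bar>) * \<bar>x - s\<bar> powr -\<alpha>)
      \<le> \<delta> powr -\<alpha> * E x + S x" for x
  proof (cases "\<bar>x - s\<bar> \<le> \<delta>")
    case True
    have "exp (- c * \<bar>x - t\<bar>) \<le> 1"
      using c by simp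
    then have "indicator {t-L..t+L} x * (exp (- c * \<bar>x - t\<bar>) * \<bar>x - s\<bar> powr -\<alpha>) \<le> S x"
      using True by (auto simp: S_def indicator_def intro!: mult_left_le_one_le)
    then show ?thesis
      using E_nonneg[of x] by (simp add: add_increasing)
  next
    case False
    then have "\<bar>x - s\<bar> powr -\<alpha> \<le> \<delta> powr -\<alpha>"
      using \<delta> \<alpha> by (intro powr_mono2') auto
    then have "indicator {t-L..t+L} x * (exp (- c * \<bar>x - t\<bar>) * \<bar>x - s\<bar> powr -\<alpha>) \<le> \<delta> powr -\<alpha> * E x"
      by (auto simp: E_def indicator_def mult.commute[of "exp _"] intro!: mult_left_mono)
    then show ?thesis
      using S_nonneg[of x] by (simp add: add_increasing2)
  qed
  have "(\<integral>\<^sup>+x. indicator {t-L..t+L} x * ennreal (exp (- c * \<bar>x - t\<bar>) * \<bar>x - s\<bar> powr -\<alpha>) \<partial>lborel)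
      \<le> (\<integral>\<^sup>+x. ennreal (\<delta> powr -\<alpha>) * ennreal (E x) + ennreal (S x) \<partial>lborel)"
    using split E_nonneg S_nonneg
    by (intro nn_integral_mono)
       (simp add: indicator_mult_ennreal ennreal_mult[symmetric] ennreal_plus[symmetric] ennreal_leI del: ennreal_plus)
  also have "\<dots> = ennreal (\<delta> powr -\<alpha>) * (\<integral>\<^sup>+x. ennreal (E x) \<partial>lborel) + (\<integral>\<^sup>+x. ennreal (S x) \<partial>lborel)"
    by (simp add: E_def S_def nn_integral_add nn_integral_cmult)
  also have "\<dots> \<le> ennreal (\<delta> powr -\<alpha>) * ennreal (2 / c) + ennreal (2 * \<delta> powr (-\<alpha> + 1) / (-\<alpha> + 1))"
    using nn_integral_centered_exp_le[OF c L, of t] nn_integral_centered_abs_powr[of "-\<alpha>" \<delta> s] \<delta> \<alpha>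
    by (intro add_mono mult_left_mono) (auto simp: E_def S_def indicator_mult_ennreal)
  also have "\<dots> = ennreal (\<delta> powr -\<alpha> * (2 / c) + 2 * \<delta> powr (1 - \<alpha>) / (1 - \<alpha>))"
    using c \<alpha> by (simp add: ennreal_mult[symmetric] ennreal_plus[symmetric] del: ennreal_plus)
  finally show ?thesis .
qed

lemma sin_ge_half_self:
  assumes "0 \<le> x" "x \<le> pi / 3"
  shows "x / 2 \<le> sin x"
proof -
  have "(\<lambda>t. sin t - t / 2) 0 \<le> (\<lambda>t. sin t - t / 2) x"
  proof (rule DERIV_nonneg_imp_nondecreasing[OF \<open>0 \<le> x\<close>])
    fix u assume u: "0 \<le> u" "u \<le> x"
    have "cos (pi / 3) \<le> cos u"
      by (rule cos_monotone_0_pi_le) (use u assms in auto)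
    then have "0 \<le> cos u - 1 / 2"
      by (simp add: cos_60)
    moreover have "((\<lambda>t. sin t - t / 2) has_real_derivative (cos u - 1 / 2)) (at u)"
      by (auto intro!: derivative_eq_intros)
    ultimately show "\<exists>y. ((\<lambda>t. sin t - t / 2) has_real_derivative y) (at u) \<and> 0 \<le> y"
      by blast
  qed
  then show ?thesis
    by simp
qed

lemma norm_cis_minus_one_ge:
  assumes "\<bar>y\<bar> \<le> pi"
  shows "\<bar>y\<bar> / pi \<le> cmod (cis y - 1)"
proof (cases "\<bar>y\<bar> \<le> pi / 2")
  case True
  have "\<bar>y\<bar> / pi \<le> \<bar>y\<bar> / 3"
    using pi_gt3 by (intro divide_left_mono) auto
  also have "\<dots> \<le> \<bar>sin \<bar>y\<bar>\<bar>"
  proof (cases "\<bar>y\<bar> \<le> pi / 3")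
    case True
    then show ?thesis
      using sin_ge_half_self[of "\<bar>y\<bar>"] by simp
  next
    case False
    have "pi / 3 / 2 \<le> sin (pi / 3)"
      by (rule sin_ge_half_self) auto
    also have "sin (pi / 3) \<le> sin \<bar>y\<bar>"
      by (rule sin_monotone_2pi_le) (use False \<open>\<bar>y\<bar> \<le> pi / 2\<close> in auto)
    finally show ?thesis
      using \<open>\<bar>y\<bar> \<le> pi / 2\<close> by simp
  qed
  also have "\<dots> = \<bar>Im (cis y - 1)\<bar>"
    by (simp add: abs_if)
  also have "\<dots> \<le> cmod (cis y - 1)"
    by (rule abs_Im_le_cmod)
  finally show ?thesis .
next
  case False
  have "cos \<bar>y\<bar> \<le> cos (pi / 2)"
    by (rule cos_monotone_0_pi_le) (use False assms in auto)
  then have "1 \<le> \<bar>Re (cis y - 1)\<bar>"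
    by simp
  also have "\<dots> \<le> cmod (cis y - 1)"
    by (rule abs_Re_le_cmod)
  moreover have "\<bar>y\<bar> / pi \<le> 1"
    using assms by simp
  ultimately show ?thesis
    by linarith
qed

lemma inverse_le_powr_interpolation:
  fixes d e m \<alpha> :: real
  assumes "0 < d" "0 < e" "0 < \<alpha>" "\<alpha> < 1" "d \<le> m" "e \<le> m"
  shows "1 / m \<le> d powr -\<alpha> * e powr (\<alpha> - 1)"
proof -
  have "d powr \<alpha> * e powr (1 - \<alpha>) \<le> m powr \<alpha> * m powr (1 - \<alpha>)"
    using assms by (intro mult_mono powr_mono2) auto
  also have "\<dots> = m"
    using assms by (simp add: powr_add[symmetric])
  finally have "1 / m \<le> 1 / (d powr \<alpha> * e powr (1 - \<alpha>))"
    using assms by (intro divide_left_mono) auto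
  also have "\<dots> = d powr -\<alpha> * e powr (\<alpha> - 1)"
    using assms by (simp add: powr_minus_divide powr_diff)
  finally show ?thesis .
qed

lemma inverse_norm_rcis_diff_le:
  fixes r s y a \<alpha> :: real
  assumes a: "0 < a" "a \<le> 1" "a \<le> r" and rs: "r \<noteq> s" "0 \<le> s" and \<alpha>: "0 < \<alpha>" "\<alpha> < 1"
    and y: "\<bar>y\<bar> \<le> pi" "y \<noteq> 0"
  shows "1 / cmod (of_real r * cis y - of_real s) \<le> 2 * pi / a * \<bar>r - s\<bar> powr -\<alpha> * \<bar>y\<bar> powr (\<alpha> - 1)"
proof -
  define m where "m = cmod (of_real r * cis y - of_real s)"
  define c where "c = a / (2 * pi)"
  have c: "0 < c" "c \<le> 1"
    using a pi_gt3 by (auto simp: c_def field_simps)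
  have radial: "\<bar>r - s\<bar> \<le> m"
    using norm_triangle_ineq3[of "of_real r * cis y" "of_real s"] a rs
    by (simp add: m_def norm_mult)
  have "r * cmod (cis y - 1) = cmod (of_real r * (cis y - 1))"
    using a by (simp add: norm_mult)
  also have "\<dots> = cmod ((of_real r * cis y - of_real s) - of_real (r - s))"
    by (simp add: algebra_simps)
  also have "\<dots> \<le> m + \<bar>r - s\<bar>"
    unfolding m_def by (metis norm_of_real norm_triangle_ineq4)
  finally have "a * (\<bar>y\<bar> / pi) \<le> 2 * m"
    using radial mult_mono[OF \<open>a \<le> r\<close> norm_cis_minus_one_ge[OF y(1)]] a by auto
  then have angular: "c * \<bar>y\<bar> \<le> m"
    by (simp add: c_def field_simps)
  have "1 / m \<le> \<bar>r - s\<bar> powr -\<alpha> * (c * \<bar>y\<bar>) powr (\<alpha> - 1)"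
    by (rule inverse_le_powr_interpolation) (use rs c y \<alpha> radial angular in auto)
  also have "\<dots> = \<bar>r - s\<bar> powr -\<alpha> * c powr (\<alpha> - 1) * \<bar>y\<bar> powr (\<alpha> - 1)"
    using c by (simp add: powr_mult)
  also have "\<dots> \<le> \<bar>r - s\<bar> powr -\<alpha> * c powr -1 * \<bar>y\<bar> powr (\<alpha> - 1)"
    using c \<alpha> by (intro mult_right_mono mult_left_mono powr_mono') auto
  also have "\<dots> = 2 * pi / a * \<bar>r - s\<bar> powr -\<alpha> * \<bar>y\<bar> powr (\<alpha> - 1)"
    using c a by (simp add: powr_minus_divide c_def)
  finally show ?thesis
    by (simp add: m_def)
qed

lemma inverse_norm_cis_sub_le:
  assumes a: "0 < a" "a \<le> 1" "a \<le> r" and rz: "r \<noteq> cmod z" and \<alpha>: "0 < \<alpha>" "\<alpha> < 1"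
    and p: "cis p = cis (Arg z)" "\<bar>\<theta> - p\<bar> \<le> pi" "\<theta> \<noteq> p"
  shows "1 / cmod (of_real r * cis \<theta> - z) \<le> 2 * pi / a * \<bar>r - cmod z\<bar> powr -\<alpha> * \<bar>\<theta> - p\<bar> powr (\<alpha> - 1)"
proof -
  have "z = of_real (cmod z) * cis p"
    using p(1) rcis_cmod_Arg[of z] by (simp add: rcis_def)
  then have "of_real r * cis \<theta> - z = cis p * (of_real r * cis (\<theta> - p) - of_real (cmod z))"
    by (simp add: cis_divide[symmetric] algebra_simps)
  then have "cmod (of_real r * cis \<theta> - z) = cmod (of_real r * cis (\<theta> - p) - of_real (cmod z))"
    by (simp add: norm_mult)
  then show ?thesis
    using inverse_norm_rcis_diff_le[OF a rz _ \<alpha>, of "\<theta> - p"] p by simp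
qed

lemma Arg_shift_near:
  assumes "\<theta> \<in> {-pi..pi}"
  obtains p where "p \<in> {Arg z - 2 * pi, Arg z, Arg z + 2 * pi}" "cis p = cis (Arg z)" "\<bar>\<theta> - p\<bar> \<le> pi"
proof -
  have Arg: "-pi < Arg z" "Arg z \<le> pi"
    using Arg_bounded[of z] by auto
  have cis: "cis (Arg z + 2 * pi) = cis (Arg z)" "cis (Arg z - 2 * pi) = cis (Arg z)"
    by (simp_all add: cis_mult[symmetric] cis_divide[symmetric])
  consider "pi < \<theta> - Arg z" | "\<theta> - Arg z < -pi" | "\<bar>\<theta> - Arg z\<bar> \<le> pi"
    by linarith
  then show thesis
  proof cases
    case 1
    with assms Arg cis show thesis
      by (intro that[of "Arg z + 2 * pi"]) auto
  next
    case 2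
    with assms Arg cis show thesis
      by (intro that[of "Arg z - 2 * pi"]) auto
  qed (auto intro: that)
qed

lemma angular_int_le:
  assumes a: "0 < a" "a \<le> 1" "a \<le> r" and rz: "r \<noteq> cmod z" and \<alpha>: "0 < \<alpha>" "\<alpha> < 1"
  shows "angular_int r z \<le> ennreal (12 * pi\<^sup>2 / (a * \<alpha>) * \<bar>r - cmod z\<bar> powr -\<alpha>)"
proof -
  define B where "B = 2 * pi / a * \<bar>r - cmod z\<bar> powr -\<alpha>"
  have B: "0 \<le> B"
    using a by (simp add: B_def)
  define P where "P = {Arg z - 2 * pi, Arg z, Arg z + 2 * pi}"
  define h where "h p \<theta> = ennreal B * (indicator {p-pi..p+pi} \<theta> * ennreal (\<bar>\<theta> - p\<bar> powr (\<alpha> - 1)))" for p \<theta>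
  have [measurable]: "h p \<in> borel_measurable borel" for p
    unfolding h_def by measurable
  have pointwise: "indicator {-pi..pi} \<theta> * ennreal (1 / cmod (of_real r * cis \<theta> - z)) \<le> (\<Sum>p\<in>P. h p \<theta>)"
    if "\<theta> \<notin> P" for \<theta>
  proof (cases "\<theta> \<in> {-pi..pi}")
    case True
    then obtain p where p: "p \<in> P" "cis p = cis (Arg z)" "\<bar>\<theta> - p\<bar> \<le> pi"
      unfolding P_def by (rule Arg_shift_near)
    have "1 / cmod (of_real r * cis \<theta> - z) \<le> B * \<bar>\<theta> - p\<bar> powr (\<alpha> - 1)"
      unfolding B_def using p that by (intro inverse_norm_cis_sub_le[OF a rz \<alpha>]) auto
    then have "indicator {-pi..pi} \<theta> * ennreal (1 / cmod (of_real r * cis \<theta> - z)) \<le> h p \<theta>"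
      using True p(3) B by (auto simp: h_def indicator_def ennreal_mult[symmetric] intro!: ennreal_leI)
    also have "\<dots> \<le> (\<Sum>p\<in>P. h p \<theta>)"
      using p(1) by (intro member_le_sum) (auto simp: P_def)
    finally show ?thesis .
  qed simp
  have "finite P" "card P \<le> 3"
    by (auto simp: P_def card_insert_if)
  have "angular_int r z \<le> (\<integral>\<^sup>+\<theta>. (\<Sum>p\<in>P. h p \<theta>) \<partial>lborel)"
    unfolding angular_int_def
    using AE_not_in[OF countable_imp_null_set_lborel[OF countable_finite[OF \<open>finite P\<close>]]]
    by (rule nn_integral_mono_AE[OF AE_mp]) (use pointwise in auto)
  also have "\<dots> = (\<Sum>p\<in>P. \<integral>\<^sup>+\<theta>. h p \<theta> \<partial>lborel)"
    by (rule nn_integral_sum) auto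
  also have "\<dots> = of_nat (card P) * ennreal (B * (2 * pi powr \<alpha> / \<alpha>))"
    using nn_integral_centered_abs_powr[of "\<alpha> - 1" pi] \<alpha> B
    by (simp add: h_def nn_integral_cmult ennreal_mult[symmetric])
  also have "\<dots> \<le> of_nat 3 * ennreal (B * (2 * pi / \<alpha>))"
    using \<open>card P \<le> 3\<close> B \<alpha> pi_gt3 powr_mono[of \<alpha> 1 pi]
    by (intro mult_mono ennreal_leI mult_left_mono) (auto simp: field_simps)
  also have "\<dots> = ennreal (3 * (B * (2 * pi / \<alpha>)))"
    using ennreal_mult[of 3 "B * (2 * pi / \<alpha>)"] B \<alpha> by simp
  also have "3 * (B * (2 * pi / \<alpha>)) = 12 * pi\<^sup>2 / (a * \<alpha>) * \<bar>r - cmod z\<bar> powr -\<alpha>"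
    by (simp add: B_def power2_eq_square)
  finally show ?thesis .
qed

lemma powr_le_mult_exp:
  fixes y k :: real
  assumes "0 \<le> k" "0 \<le> y"
  shows "y powr k \<le> (k + 1) powr k * exp y"
proof -
  have "y \<le> (k + 1) * exp (y / (k + 1))"
    using exp_ge_add_one_self[of "y / (k + 1)"] assms by (simp add: field_simps)
  then have "y powr k \<le> ((k + 1) * exp (y / (k + 1))) powr k"
    using assms by (intro powr_mono2) auto
  also have "\<dots> = (k + 1) powr k * exp (y / (k + 1) * k)"
    using assms by (simp add: powr_mult exp_powr_real)
  also have "\<dots> \<le> (k + 1) powr k * exp y"
    using assms by (intro mult_left_mono) (auto simp: field_simps)
  finally show ?thesis .
qed

lemma one_minus_inverse_le_ln:
  fixes r :: real
  assumes "0 < r"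
  shows "1 - 1 / r \<le> ln r"
  using ln_le_minus_one[of "1 / r"] assms by (simp add: ln_div)

lemma abs_diff_one_div_le_abs_ln:
  fixes b r :: real
  assumes "1 \<le> b" "0 < r" "r \<le> b"
  shows "\<bar>r - 1\<bar> / b \<le> \<bar>ln r\<bar>"
proof (cases "1 \<le> r")
  case True
  have "(r - 1) / b \<le> (r - 1) / r"
    using True assms by (intro divide_left_mono) auto
  then show ?thesis
    using True one_minus_inverse_le_ln[OF \<open>0 < r\<close>] by (auto simp: diff_divide_distrib)
next
  case False
  have "(1 - r) * 1 \<le> (1 - r) * b"
    using False assms by (intro mult_left_mono) auto
  then have "(1 - r) / b \<le> 1 - r"
    using assms by (simp add: divide_le_eq mult.commute)
  then show ?thesis
    using False ln_le_minus_one[OF \<open>0 < r\<close>] by auto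
qed

lemma abs_ln_le_mult_abs_diff_one:
  fixes b r :: real
  assumes "0 < r" "1 / b \<le> r" "1 \<le> b"
  shows "\<bar>ln r\<bar> \<le> b * \<bar>r - 1\<bar>"
proof (cases "1 \<le> r")
  case True
  have "(r - 1) * 1 \<le> (r - 1) * b"
    using True assms by (intro mult_left_mono) auto
  then show ?thesis
    using True ln_le_minus_one[OF \<open>0 < r\<close>] ln_ge_zero[OF True] by (simp add: mult.commute)
next
  case False
  have "1 / r \<le> b"
    using assms by (simp add: field_simps)
  then have "(1 - r) * (1 / r) \<le> (1 - r) * b"
    using False by (intro mult_left_mono) auto
  moreover have "- ln r \<le> (1 - r) * (1 / r)"
    using one_minus_inverse_le_ln[OF \<open>0 < r\<close>] \<open>0 < r\<close> by (simp add: field_simps)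
  moreover have "ln r < 0"
    using False \<open>0 < r\<close> by simp
  ultimately show ?thesis
    using False by (simp add: mult.commute)
qed

lemma radial_weight_le:
  fixes b r k N :: real
  assumes b: "1 \<le> b" "1 / b \<le> r" "r \<le> b" and k: "0 \<le> k" and N: "0 < N"
  shows "r * exp (- N * \<bar>ln r\<bar>) * \<bar>ln r\<bar> powr k
     \<le> b * (2 * b\<^sup>2 * (k + 1) / N) powr k * exp (- (N / (2 * b)) * \<bar>r - 1\<bar>)"
proof -
  define u where "u = \<bar>r - 1\<bar>"
  define y where "y = N * u / (2 * b)"
  have "0 \<le> u" "0 \<le> y"
    using b N by (auto simp: u_def y_def)
  have "0 < 1 / b"
    using b(1) by simp
  then have "0 < r"
    using b(2) by linarith
  have "N * (u / b) \<le> N * \<bar>ln r\<bar>"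
    using mult_left_mono[OF abs_diff_one_div_le_abs_ln[OF b(1) \<open>0 < r\<close> b(3)], of N] N by (simp add: u_def)
  then have "r * exp (- N * \<bar>ln r\<bar>) * \<bar>ln r\<bar> powr k \<le> b * exp (- N * (u / b)) * (b * u) powr k"
    using abs_ln_le_mult_abs_diff_one[OF \<open>0 < r\<close> b(2,1)] b k
    by (intro mult_mono powr_mono2) (auto simp: u_def)
  also have "\<dots> = b * exp (- (N / (2 * b)) * u) * ((2 * b\<^sup>2 / N) powr k * (y powr k * exp (- y)))"
  proof -
    have "exp (- N * (u / b)) = exp (- (N / (2 * b)) * u) * exp (- y)"
      by (simp add: y_def field_simps flip: exp_add)
    moreover have "b * u = 2 * b\<^sup>2 / N * y"
      using N b by (simp add: y_def power2_eq_square field_simps)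
    then have "(b * u) powr k = (2 * b\<^sup>2 / N) powr k * y powr k"
      using N \<open>0 \<le> y\<close> powr_mult[of "2 * b\<^sup>2 / N" y k] by simp
    ultimately show ?thesis
      by simp
  qed
  also have "\<dots> \<le> b * exp (- (N / (2 * b)) * u) * ((2 * b\<^sup>2 / N) powr k * (k + 1) powr k)"
    using powr_le_mult_exp[OF k \<open>0 \<le> y\<close>] b by (intro mult_left_mono) (auto simp: exp_minus field_simps)
  also have "\<dots> = b * (2 * b\<^sup>2 * (k + 1) / N) powr k * exp (- (N / (2 * b)) * \<bar>r - 1\<bar>)"
    using N b k by (simp add: u_def powr_mult[symmetric])
  finally show ?thesis .
qed

lemma radial_int_le_decay_integral:
  fixes \<epsilon> \<nu> C :: real and n :: nat and g :: "real \<Rightarrow> real"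
  defines "b \<equiv> 2 powr \<epsilon>"
  assumes \<epsilon>: "0 < \<epsilon>" and \<nu>: "1 \<le> \<nu>" and n: "0 < n" and C: "0 \<le> C"
    and g: "g \<in> borel_measurable borel" "\<And>r. 0 \<le> g r"
    and angular: "\<And>r. 1 / b \<le> r \<Longrightarrow> r \<le> b \<Longrightarrow> r \<noteq> cmod z \<Longrightarrow> angular_int r z \<le> ennreal (C * g r)"
  shows "radial_int \<epsilon> \<nu> n z \<le> ennreal (C * b * (2 * b\<^sup>2 * \<nu> / real n) powr (\<nu> - 1)) *
           (\<integral>\<^sup>+r. indicator {1-b..1+b} r * ennreal (exp (- (real n / (2 * b)) * \<bar>r - 1\<bar>) * g r) \<partial>lborel)"
proof -
  define W where "W = b * (2 * b\<^sup>2 * \<nu> / real n) powr (\<nu> - 1)"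
  define D where "D r = exp (- (real n / (2 * b)) * \<bar>r - 1\<bar>) * g r" for r
  have b: "1 \<le> b" "0 < 1 / b"
    using \<epsilon> ge_one_powr_ge_zero[of 2 \<epsilon>] by (auto simp: b_def)
  have [measurable]: "D \<in> borel_measurable borel"
    unfolding D_def using g(1) by measurable
  have pointwise: "indicator {1/b..b} r * ennreal (r * exp (- n * \<bar>ln r\<bar>) * \<bar>ln r\<bar> powr (\<nu> - 1)) * angular_int r z
      \<le> ennreal (C * W) * (indicator {1-b..1+b} r * ennreal (D r))" if "r \<noteq> cmod z" for r
  proof (cases "r \<in> {1/b..b}")
    case True
    have "r * exp (- n * \<bar>ln r\<bar>) * \<bar>ln r\<bar> powr (\<nu> - 1) \<le> W * exp (- (real n / (2 * b)) * \<bar>r - 1\<bar>)"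
      using radial_weight_le[of b r "\<nu> - 1" n] True b \<nu> n by (simp add: W_def)
    moreover have "angular_int r z \<le> ennreal (C * g r)"
      using True that by (intro angular) auto
    ultimately have "indicator {1/b..b} r * ennreal (r * exp (- n * \<bar>ln r\<bar>) * \<bar>ln r\<bar> powr (\<nu> - 1)) * angular_int r z
        \<le> ennreal (W * exp (- (real n / (2 * b)) * \<bar>r - 1\<bar>)) * ennreal (C * g r)"
      using True by (auto intro!: mult_mono ennreal_leI)
    also have "\<dots> = ennreal (C * W) * (indicator {1-b..1+b} r * ennreal (D r))"
    proof -
      have "0 < r"
        using True b(2) by (meson atLeastAtMost_iff less_le_trans)
      then have "r \<in> {1-b..1+b}"
        using True b(1) by auto
      then show ?thesis
        using b(1) C g(2)[of r] by (simp add: D_def W_def ennreal_mult[symmetric] mult_ac)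
    qed
    finally show ?thesis .
  qed simp
  have "radial_int \<epsilon> \<nu> n z \<le> (\<integral>\<^sup>+r. ennreal (C * W) * (indicator {1-b..1+b} r * ennreal (D r)) \<partial>lborel)"
    unfolding radial_int_def powr_minus_divide b_def[symmetric]
    using AE_lborel_singleton[of "cmod z"] by (rule nn_integral_mono_AE[OF AE_mp]) (use pointwise in auto)
  also have "\<dots> = ennreal (C * W) * (\<integral>\<^sup>+r. indicator {1-b..1+b} r * ennreal (D r) \<partial>lborel)"
    by (rule nn_integral_cmult) measurable
  finally show ?thesis
    by (simp add: W_def D_def mult.assoc)
qed

lemma powr_pred_divide:
  fixes x N p :: real
  assumes "0 \<le> x" "0 < N"
  shows "(x / N) powr (p - 1) / N = x powr (p - 1) / N powr p"
  using assms by (simp add: powr_divide powr_diff)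

lemma log_scale_singular_bound:
  fixes N b :: real
  assumes N: "0 < N" "2 \<le> ln N" and b: "0 \<le> b"
  defines "\<alpha> \<equiv> 1 / ln N" and "\<delta> \<equiv> N powr -2"
  shows "\<delta> powr -\<alpha> * (4 * b / N) + 2 * \<delta> powr (1 - \<alpha>) / (1 - \<alpha>) \<le> exp 2 * (4 * b + 4) / N"
proof -
  have "0 < ln N"
    using N(2) by linarith
  then have \<alpha>: "0 < \<alpha>" "\<alpha> \<le> 1 / 2"
    using N(2) by (auto simp: \<alpha>_def divide_le_eq)
  have \<delta>_\<alpha>: "\<delta> powr -\<alpha> = exp 2"
    using N \<open>0 < ln N\<close> by (simp add: \<delta>_def \<alpha>_def powr_powr powr_def)
  have "\<delta> \<le> 1 / N"
  proof -
    have "1 \<le> N"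
      using N ln_le_zero_iff[of N] by linarith
    then have "N * 1 \<le> N powr 2"
      using N by (simp add: power2_eq_square mult_left_mono)
    then show ?thesis
      using N by (simp add: \<delta>_def powr_minus_divide field_simps)
  qed
  have "\<delta> powr (1 - \<alpha>) = \<delta> * exp 2"
    using powr_add[of \<delta> 1 "-\<alpha>"] \<delta>_\<alpha> N by (simp add: \<delta>_def)
  then have "2 * \<delta> powr (1 - \<alpha>) / (1 - \<alpha>) = 2 * exp 2 * \<delta> / (1 - \<alpha>)"
    by simp
  also have "\<dots> \<le> 2 * exp 2 * \<delta> / (1 / 2)"
    using \<alpha> N by (intro divide_left_mono) (auto simp: \<delta>_def)
  also have "\<dots> \<le> 4 * exp 2 / N"
    using mult_right_mono[OF \<open>\<delta> \<le> 1 / N\<close>, of "4 * exp 2"] by (simp add: mult_ac)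
  moreover have "exp 2 * (4 * b + 4) / N = \<delta> powr -\<alpha> * (4 * b / N) + 4 * exp 2 / N"
    by (simp add: \<delta>_\<alpha> add_divide_distrib algebra_simps)
  ultimately show ?thesis
    by linarith
qed

lemma radial_int_le_singular:
  fixes \<epsilon> \<nu> \<alpha> \<delta> :: real and n :: nat
  defines "b \<equiv> 2 powr \<epsilon>"
  assumes \<epsilon>: "0 < \<epsilon>" and \<nu>: "1 \<le> \<nu>" and n: "0 < n" and \<alpha>: "0 < \<alpha>" "\<alpha> < 1" and \<delta>: "0 < \<delta>"
  shows "radial_int \<epsilon> \<nu> n z \<le> ennreal (12 * pi\<^sup>2 * b / \<alpha> * b * (2 * b\<^sup>2 * \<nu> / real n) powr (\<nu> - 1) *
           (\<delta> powr -\<alpha> * (4 * b / real n) + 2 * \<delta> powr (1 - \<alpha>) / (1 - \<alpha>)))"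
proof -
  define C where "C = 12 * pi\<^sup>2 * b / \<alpha> * b * (2 * b\<^sup>2 * \<nu> / real n) powr (\<nu> - 1)"
  have b: "1 \<le> b"
    using \<epsilon> ge_one_powr_ge_zero[of 2 \<epsilon>] by (simp add: b_def)
  have "radial_int \<epsilon> \<nu> n z \<le> ennreal C *
      (\<integral>\<^sup>+r. indicator {1-b..1+b} r * ennreal (exp (- (real n / (2 * b)) * \<bar>r - 1\<bar>) * \<bar>r - cmod z\<bar> powr -\<alpha>) \<partial>lborel)"
    unfolding C_def b_def
  proof (rule radial_int_le_decay_integral[OF \<epsilon> \<nu> n, where g = "\<lambda>r. \<bar>r - cmod z\<bar> powr -\<alpha>"])
    fix r assume "1 / 2 powr \<epsilon> \<le> r" "r \<le> 2 powr \<epsilon>" "r \<noteq> cmod z"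
    then have "angular_int r z \<le> ennreal (12 * pi\<^sup>2 / (1 / b * \<alpha>) * \<bar>r - cmod z\<bar> powr -\<alpha>)"
      using b \<alpha> by (intro angular_int_le) (auto simp: b_def)
    then show "angular_int r z \<le> ennreal (12 * pi\<^sup>2 * 2 powr \<epsilon> / \<alpha> * \<bar>r - cmod z\<bar> powr -\<alpha>)"
      by (simp add: b_def mult_ac)
  qed (use \<alpha> in auto)
  also have "\<dots> \<le> ennreal C * ennreal (\<delta> powr -\<alpha> * (2 / (real n / (2 * b))) + 2 * \<delta> powr (1 - \<alpha>) / (1 - \<alpha>))"
    using n b \<alpha> \<delta> by (intro mult_left_mono nn_integral_exp_times_singular_le) auto
  also have "\<dots> = ennreal (C * (\<delta> powr -\<alpha> * (2 / (real n / (2 * b))) + 2 * \<delta> powr (1 - \<alpha>) / (1 - \<alpha>)))"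
    by (rule ennreal_mult[symmetric]) (use b \<alpha> \<delta> in \<open>auto simp: C_def\<close>)
  finally show ?thesis
    by (simp add: C_def)
qed

lemma radial_int_le_log:
  fixes \<epsilon> \<nu> :: real
  assumes \<epsilon>: "0 < \<epsilon>" and \<nu>: "1 \<le> \<nu>"
  shows "\<exists>K>0. \<forall>n\<ge>9. \<forall>z. radial_int \<epsilon> \<nu> n z \<le> ennreal (K * ln (real n) / real n powr \<nu>)"
proof -
  define b where "b = 2 powr \<epsilon>"
  have b: "1 \<le> b"
    using \<epsilon> ge_one_powr_ge_zero[of 2 \<epsilon>] by (simp add: b_def)
  define K where "K = 12 * pi\<^sup>2 * b\<^sup>2 * (2 * b\<^sup>2 * \<nu>) powr (\<nu> - 1) * exp 2 * (4 * b + 4)"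
  have "K > 0"
    using b \<nu> by (simp add: K_def)
  moreover have "radial_int \<epsilon> \<nu> n z \<le> ennreal (K * ln (real n) / real n powr \<nu>)" if n: "9 \<le> n" for n :: nat and z
  proof -
    define N where "N = real n"
    define C where "C = 12 * pi\<^sup>2 * b * ln N * b * (2 * b\<^sup>2 * \<nu> / N) powr (\<nu> - 1)"
    have "exp 2 \<le> N"
      using exp_le power_mono[OF exp_le, of 2] n by (simp add: N_def exp_of_nat_mult[symmetric])
    then have N: "0 < N" "2 \<le> ln N" and "1 < N"
      using less_le_trans[OF _ \<open>exp 2 \<le> N\<close>, of 1] n by (auto simp: N_def ln_ge_iff)
    have "radial_int \<epsilon> \<nu> n z \<le> ennreal (C *
        ((N powr -2) powr -(1 / ln N) * (4 * b / N) + 2 * (N powr -2) powr (1 - 1 / ln N) / (1 - 1 / ln N)))"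
      using radial_int_le_singular[OF \<epsilon> \<nu>, of n "1 / ln N" "N powr -2"] N \<open>1 < N\<close> n
      by (simp add: C_def N_def b_def)
    also have "\<dots> \<le> ennreal (C * (exp 2 * (4 * b + 4) / N))"
      using log_scale_singular_bound[OF N, of b] b N \<open>1 < N\<close>
      by (intro ennreal_leI mult_left_mono) (auto simp: C_def)
    also have "C * (exp 2 * (4 * b + 4) / N)
        = 12 * pi\<^sup>2 * b\<^sup>2 * exp 2 * (4 * b + 4) * ln N * ((2 * b\<^sup>2 * \<nu> / N) powr (\<nu> - 1) / N)"
      by (simp add: C_def power2_eq_square algebra_simps add_divide_distrib)
    also have "\<dots> = K * ln N / N powr \<nu>"
      using N b \<nu> by (simp add: powr_pred_divide K_def)
    finally show ?thesis
      by (simp add: N_def)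
  qed
  ultimately show ?thesis
    by blast
qed

lemma annulus_gap_le_dist:
  fixes b \<rho> r :: real and z :: complex
  assumes b: "1 \<le> b" "b < \<rho>" and r: "1 / b \<le> r" "r \<le> b" and z: "z = 0 \<or> ln \<rho> \<le> \<bar>ln (cmod z)\<bar>"
  shows "min (\<rho> - b) (1 / b - 1 / \<rho>) \<le> \<bar>r - cmod z\<bar>"
proof -
  have "0 < \<rho>" "0 < 1 / \<rho>"
    using b by auto
  consider "cmod z = 0" | "\<rho> \<le> cmod z" | "cmod z \<le> 1 / \<rho>"
  proof (cases "z = 0")
    case False
    then have "ln \<rho> \<le> ln (cmod z) \<or> ln (cmod z) \<le> - ln \<rho>"
      using z by arith
    then have "ln \<rho> \<le> ln (cmod z) \<or> ln (cmod z) \<le> ln (1 / \<rho>)"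
      using \<open>0 < \<rho>\<close> by (simp add: ln_div)
    then show thesis
      using that False \<open>0 < \<rho>\<close> by auto
  qed (use that in auto)
  then show ?thesis
  proof cases
    case 1
    have "1 / b - 1 / \<rho> \<le> r"
      using r(1) \<open>0 < 1 / \<rho>\<close> by linarith
    then show ?thesis
      using 1 by linarith
  qed (use r in auto)
qed

lemma radial_int_le_gap:
  fixes \<epsilon> \<nu> \<delta> :: real and n :: nat
  defines "b \<equiv> 2 powr \<epsilon>"
  assumes \<epsilon>: "0 < \<epsilon>" and \<nu>: "1 \<le> \<nu>" and n: "0 < n" and \<delta>: "0 < \<delta>"
    and gap: "\<And>r. 1 / b \<le> r \<Longrightarrow> r \<le> b \<Longrightarrow> \<delta> \<le> \<bar>r - cmod z\<bar>"
  shows "radial_int \<epsilon> \<nu> n z \<le> ennreal (24 * pi\<^sup>2 * b * \<delta> powr -(1 / 2) * b * (2 * b\<^sup>2 * \<nu> / real n) powr (\<nu> - 1) *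
           (4 * b / real n))"
proof -
  define C where "C = 24 * pi\<^sup>2 * b * \<delta> powr -(1 / 2) * b * (2 * b\<^sup>2 * \<nu> / real n) powr (\<nu> - 1)"
  have b: "1 \<le> b"
    using \<epsilon> ge_one_powr_ge_zero[of 2 \<epsilon>] by (simp add: b_def)
  have "radial_int \<epsilon> \<nu> n z \<le> ennreal C *
      (\<integral>\<^sup>+r. indicator {1-b..1+b} r * ennreal (exp (- (real n / (2 * b)) * \<bar>r - 1\<bar>) * 1) \<partial>lborel)"
    unfolding C_def b_def
  proof (rule radial_int_le_decay_integral[OF \<epsilon> \<nu> n, where g = "\<lambda>_. 1"])
    fix r assume r: "1 / 2 powr \<epsilon> \<le> r" "r \<le> 2 powr \<epsilon>"
    then have "\<delta> \<le> \<bar>r - cmod z\<bar>"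
      by (intro gap) (auto simp: b_def)
    then have "angular_int r z \<le> ennreal (12 * pi\<^sup>2 / (1 / b * (1 / 2)) * \<bar>r - cmod z\<bar> powr -(1 / 2))"
      using b r \<delta> by (intro angular_int_le) (auto simp: b_def)
    also have "\<dots> \<le> ennreal (24 * pi\<^sup>2 * 2 powr \<epsilon> * \<delta> powr -(1 / 2) * 1)"
      using \<open>\<delta> \<le> \<bar>r - cmod z\<bar>\<close> \<delta> b by (auto simp: b_def intro!: ennreal_leI powr_mono2')
    finally show "angular_int r z \<le> ennreal (24 * pi\<^sup>2 * 2 powr \<epsilon> * \<delta> powr -(1 / 2) * 1)" .
  qed (use \<delta> in auto)
  also have "\<dots> \<le> ennreal C * ennreal (2 / (real n / (2 * b)))"
    using nn_integral_centered_exp_le[of "real n / (2 * b)" b 1] n b by (intro mult_left_mono) simp_all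
  also have "\<dots> = ennreal (C * (4 * b / real n))"
    using b \<delta> by (simp add: C_def ennreal_mult[symmetric])
  finally show ?thesis
    by (simp add: C_def)
qed

lemma radial_int_le_far:
  fixes \<epsilon> \<nu> \<rho> :: real
  assumes \<epsilon>: "0 < \<epsilon>" and \<nu>: "1 \<le> \<nu>" and \<rho>: "2 powr \<epsilon> < \<rho>"
  shows "\<exists>K>0. \<forall>n>0. \<forall>z. z = 0 \<or> ln \<rho> \<le> \<bar>ln (cmod z)\<bar> \<longrightarrow>
           radial_int \<epsilon> \<nu> n z \<le> ennreal (K / real n powr \<nu>)"
proof -
  define b where "b = 2 powr \<epsilon>"
  have b: "1 \<le> b" "b < \<rho>"
    using \<epsilon> \<rho> ge_one_powr_ge_zero[of 2 \<epsilon>] by (simp_all add: b_def)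
  define \<delta> where "\<delta> = min (\<rho> - b) (1 / b - 1 / \<rho>)"
  have "0 < \<delta>"
    using b by (auto simp: \<delta>_def frac_less2)
  define K where "K = 96 * pi\<^sup>2 * b ^ 3 * \<delta> powr -(1 / 2) * (2 * b\<^sup>2 * \<nu>) powr (\<nu> - 1)"
  have "0 < K"
    using b \<nu> \<open>0 < \<delta>\<close> by (simp add: K_def)
  moreover have "radial_int \<epsilon> \<nu> n z \<le> ennreal (K / real n powr \<nu>)"
    if n: "0 < n" and z: "z = 0 \<or> ln \<rho> \<le> \<bar>ln (cmod z)\<bar>" for n :: nat and z
  proof -
    have "radial_int \<epsilon> \<nu> n z \<le> ennreal (24 * pi\<^sup>2 * b * \<delta> powr -(1 / 2) * b *
        (2 * b\<^sup>2 * \<nu> / real n) powr (\<nu> - 1) * (4 * b / real n))"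
      using radial_int_le_gap[OF \<epsilon> \<nu> n \<open>0 < \<delta>\<close>] annulus_gap_le_dist[OF b _ _ z]
      by (simp add: b_def \<delta>_def)
    also have "24 * pi\<^sup>2 * b * \<delta> powr -(1 / 2) * b * (2 * b\<^sup>2 * \<nu> / real n) powr (\<nu> - 1) * (4 * b / real n)
        = 96 * pi\<^sup>2 * b ^ 3 * \<delta> powr -(1 / 2) * ((2 * b\<^sup>2 * \<nu> / real n) powr (\<nu> - 1) / real n)"
      by (simp add: power3_eq_cube)
    also have "\<dots> = K / real n powr \<nu>"
      using n b \<nu> by (simp add: powr_pred_divide K_def)
    finally show ?thesis .
  qed
  ultimately show ?thesis
    by blast
qed

theorem lemma3p14:
  fixes \<epsilon> \<nu> :: real
  assumes "\<epsilon> > 0" and "\<nu> \<ge> 1"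
  shows "(\<exists>K>0. \<forall>\<^sub>F n in sequentially.
            (SUP z. radial_int \<epsilon> \<nu> n z) \<le> ennreal (K * ln (real n) / real n powr \<nu>))
       \<and> (\<forall>\<rho>. \<rho> > 2 powr \<epsilon> \<longrightarrow>
            (\<exists>K>0. \<forall>\<^sub>F n in sequentially.
              (SUP z\<in>{z. z = 0 \<or> \<bar>ln (cmod z)\<bar> \<ge> ln \<rho>}. radial_int \<epsilon> \<nu> n z)
                \<le> ennreal (K / real n powr \<nu>)))"
proof (intro conjI allI impI)
  obtain K where "K > 0" and K: "\<And>n z. 9 \<le> n \<Longrightarrow> radial_int \<epsilon> \<nu> n z \<le> ennreal (K * ln (real n) / real n powr \<nu>)"
    using radial_int_le_log[OF assms] by auto
  then show "\<exists>K>0. \<forall>\<^sub>F n in sequentially.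
      (SUP z. radial_int \<epsilon> \<nu> n z) \<le> ennreal (K * ln (real n) / real n powr \<nu>)"
    by (intro exI[of _ K] conjI eventually_sequentiallyI[of 9] SUP_least K)
next
  fix \<rho> :: real
  assume "\<rho> > 2 powr \<epsilon>"
  then obtain K where "K > 0" and K: "\<And>n z. 0 < n \<Longrightarrow> z = 0 \<or> ln \<rho> \<le> \<bar>ln (cmod z)\<bar> \<Longrightarrow>
      radial_int \<epsilon> \<nu> n z \<le> ennreal (K / real n powr \<nu>)"
    using radial_int_le_far[OF assms \<open>\<rho> > 2 powr \<epsilon>\<close>] by blast
  then show "\<exists>K>0. \<forall>\<^sub>F n in sequentially.
      (SUP z\<in>{z. z = 0 \<or> \<bar>ln (cmod z)\<bar> \<ge> ln \<rho>}. radial_int \<epsilon> \<nu> n z) \<le> ennreal (K / real n powr \<nu>)"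
    by (intro exI[of _ K] conjI eventually_sequentiallyI[of 1] SUP_least K) auto
qed

end
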